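(* Let $p\ge 7/32$. Then for all $r\in(0,1)$, $$\sqrt{(r-r^2)^p\,K(1-r)\,K(r)}\le \frac{K(1/2)}{2^p}=\frac{\pi\sqrt\pi}{2^{p+1}\Gamma(3/4)^2}.$$
   Context: $K(x)={\cal K}(\sqrt x)=\frac\pi2\,{}_2F_1(1/2,1/2;1;x)$ for $x\in[0,1)$, where ${\cal K}(r)=\int_0^{\pi/2}(1-r^2\sin^2t)^{-1/2}dt$ is the complete elliptic integral of the first kind. *)

theory Defs
  imports "HOL-Analysis.Analysis"
begin

definition ellipticK :: "real \<Rightarrow> real" where
  "ellipticK r = integral {0..pi/2} (\<lambda>t. 1 / sqrt (1 - r^2 * (sin t)^2))"

definition K :: "real \<Rightarrow> real" where
  "K x = ellipticK (sqrt x)"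

end

(*
  Let F(x) = 2F1(1/2,1/2;1;x), so that K = (pi/2) F on [0,1). The inequality says that
  G(x) = x^p (1-x)^p F(x) F(1-x) is maximal at x = 1/2. With T = x(1-x) F' and u = T/F,
  the hypergeometric equation reads T' = F/4, so u satisfies the Riccati equation
  u' = 1/4 - u^2/(x(1-x)), and Legendre's relation says that T(x) F(1-x) + F(x) T(1-x) is
  a constant c. Then D(x) = x(1-x) (log G)'(x) = p(1-2x) + u(x) - u(1-x) vanishes at 1/2 and
  D' = 1/2 - 2p - (u(x)^2 + u(1-x)^2)/(x(1-x)). As u(x) + u(1-x) = c/(F(x) F(1-x)), crude
  numerical bounds on c and F give u(x)^2 + u(1-x)^2 >= x(1-x)/16 on (0,1/2], so for
  p >= 7/32 the function D decreases to 0 there. Hence G increases on (0,1/2] and, being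
  symmetric, is maximal at 1/2.

  The closed form of K(1/2) comes from the substitution w = 1 - cos^4 t, which turns K(1/2)
  into (sqrt 2/4) B(1/2,1/4), together with Gamma(1/4) Gamma(3/4) = sqrt 2 pi.
*)

theory Submission
  imports Defs
begin

section \<open>The value of K at 1/2\<close>

lemma has_integral_substitution_nonneg:
  fixes f g g' :: "real \<Rightarrow> real"
  assumes "a \<le> b"
    and meas: "set_borel_measurable borel {g a..g b} f"
    and deriv: "\<And>x. x \<in> {a..b} \<Longrightarrow> (g has_real_derivative g' x) (at x)"
    and cont: "continuous_on {a..b} g'"
    and g'_nonneg: "\<And>x. x \<in> {a..b} \<Longrightarrow> g' x \<ge> 0"
    and f_nonneg: "\<And>w. f w \<ge> 0"
    and I: "(f has_integral I) {g a..g b}"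
    and J: "((\<lambda>x. f (g x) * g' x) has_integral J) {a..b}"
  shows "I = J"
proof -
  have "ennreal I = (\<integral>\<^sup>+x. ennreal (f x * indicator {g a..g b} x) \<partial>lborel)"
    using nn_integral_has_integral_lebesgue[OF f_nonneg I] by (simp add: mult.commute)
  also have "\<dots> = (\<integral>\<^sup>+x. ennreal (f (g x) * g' x * indicator {a..b} x) \<partial>lborel)"
    by (rule nn_integral_substitution[OF meas deriv cont g'_nonneg \<open>a \<le> b\<close>])
  also have "\<dots> = ennreal J"
    using nn_integral_has_integral_lebesgue[OF _ J] f_nonneg g'_nonneg
    by (simp add: mult.commute)
  finally show ?thesis
    using has_integral_nonneg[OF I f_nonneg] has_integral_nonneg[OF J] f_nonneg g'_nonneg
    by (simp add: ennreal_inj)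
qed

lemma Beta_half_quarter_integrand:
  fixes t :: real
  assumes "0 < t" "t < pi/2"
  shows "(1 - cos t ^ 4) powr (1/2 - 1) * (1 - (1 - cos t ^ 4)) powr (1/4 - 1)
           * (4 * cos t ^ 3 * sin t) = 4 / sqrt (1 + (cos t)^2)"
proof -
  have s: "sin t > 0" and c: "cos t > 0"
    using assms by (auto intro!: sin_gt_zero cos_gt_zero)
  have "1 - cos t ^ 4 = (sin t)^2 * (1 + (cos t)^2)"
    using sin_cos_squared_add[of t] by algebra
  then have A: "(1 - cos t ^ 4) powr (1/2 - 1) = 1 / (sin t * sqrt (1 + (cos t)^2))"
    using s by (simp add: powr_minus_divide powr_mult powr_half_sqrt[symmetric]
        powr_powr[symmetric] add_pos_nonneg real_sqrt_mult powr_realpow)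
  have "(1 - (1 - cos t ^ 4)) powr (1/4 - 1) = ((cos t) powr 4) powr (-3/4)"
    using c by (simp add: powr_realpow)
  also have "\<dots> = cos t powr (-3)"
    by (simp add: powr_powr)
  also have "\<dots> = 1 / (cos t)^3"
    using c by (simp add: powr_minus_divide powr_realpow)
  finally show ?thesis
    unfolding A using s c by (simp add: field_simps power3_eq_cube)
qed

lemma has_integral_Beta_half_quarter:
  "((\<lambda>t. 4 / sqrt (1 + (cos t)^2)) has_integral Beta (1/2) (1/4)) {0..pi/2}"
proof -
  define f :: "real \<Rightarrow> real" where "f w = w powr (1/2 - 1) * (1 - w) powr (1/4 - 1)" for w
  define h :: "real \<Rightarrow> real" where "h t = 4 / sqrt (1 + (cos t)^2)" for t
  have "1 + (cos t)^2 \<noteq> 0" for t :: real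
    by (smt (verit) zero_le_power2)
  then have h: "(h has_integral integral {0..pi/2} h) {0..pi/2}"
    unfolding h_def
    by (intro integrable_integral integrable_continuous_real continuous_intros) auto
  have "((\<lambda>t. f (1 - cos t ^ 4) * (4 * cos t ^ 3 * sin t)) has_integral integral {0..pi/2} h)
          {0..pi/2}"
  proof (rule has_integral_spike[OF _ _ h])
    show "negligible {0, pi/2}" by simp
  qed (use Beta_half_quarter_integrand in \<open>auto simp: f_def h_def\<close>)
  moreover have "(f has_integral Beta (1/2) (1/4)) {0..1}"
    unfolding f_def by (rule has_integral_Beta_real) auto
  then have "(f has_integral Beta (1/2) (1/4)) {1 - cos 0 ^ 4..1 - cos (pi/2) ^ 4}"
    by simp
  ultimately have "Beta (1/2) (1/4) = integral {0..pi/2} h"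
  proof (intro has_integral_substitution_nonneg[where g = "\<lambda>t. 1 - cos t ^ 4"])
    show "((\<lambda>t. 1 - cos t ^ 4) has_real_derivative 4 * cos x ^ 3 * sin x) (at x)" for x
      by (auto intro!: derivative_eq_intros simp: power3_eq_cube power4_eq_xxxx)
    show "set_borel_measurable borel {1 - cos 0 ^ 4..1 - cos (pi/2) ^ 4} f"
      unfolding f_def set_borel_measurable_def by measurable
  qed (auto simp: f_def intro!: continuous_intros mult_nonneg_nonneg sin_ge_zero cos_ge_zero)
  with h show ?thesis
    unfolding h_def by simp
qed

lemma Gamma_quarter_mult_three_quarters: "Gamma (1/4::real) * Gamma (3/4) = sqrt 2 * pi"
proof -
  have "Gamma (complex_of_real (1/4)) * Gamma (1 - complex_of_real (1/4)) =
        of_real pi / sin (of_real pi * complex_of_real (1/4))"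
    by (rule Gamma_reflection_complex)
  also have "1 - complex_of_real (1/4) = complex_of_real (3/4)" by simp
  also have "of_real pi * complex_of_real (1/4) = complex_of_real (pi/4)" by simp
  finally have "complex_of_real (Gamma (1/4) * Gamma (3/4)) = complex_of_real (pi / sin (pi/4))"
    by (simp flip: Gamma_complex_of_real sin_of_real)
  then have "Gamma (1/4::real) * Gamma (3/4) = pi / sin (pi/4)"
    using of_real_eq_iff by blast
  also have "\<dots> = sqrt 2 * pi"
    by (simp add: sin_45 field_simps real_sqrt_divide)
  finally show ?thesis .
qed

lemma K_half_eq_integral: "K (1/2) = integral {0..pi/2} (\<lambda>t. sqrt 2 / sqrt (1 + (cos t)^2))"
proof -
  have "K (1/2) = integral {0..pi/2} (\<lambda>t. 1 / sqrt (1 - (1/2) * (sin t)^2))"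
    by (simp add: K_def ellipticK_def)
  also have "\<dots> = integral {0..pi/2} (\<lambda>t. sqrt 2 / sqrt (1 + (cos t)^2))"
  proof (rule integral_cong)
    fix t :: real
    have "1 - (1/2) * (sin t)^2 = (1 + (cos t)^2) / 2"
      by (simp add: cos_squared_eq field_simps)
    then have "sqrt (1 - (1/2) * (sin t)^2) = sqrt (1 + (cos t)^2) / sqrt 2"
      by (simp only: real_sqrt_divide)
    then show "1 / sqrt (1 - (1/2) * (sin t)^2) = sqrt 2 / sqrt (1 + (cos t)^2)"
      by simp
  qed
  finally show ?thesis .
qed

lemma K_half_closed_form: "K (1/2) = pi * sqrt pi / (2 * (Gamma (3/4))^2)"
proof -
  have "K (1/2) = integral {0..pi/2} (\<lambda>t. sqrt 2 / 4 * (4 / sqrt (1 + (cos t)^2)))"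
    unfolding K_half_eq_integral by (rule integral_cong) auto
  also have "\<dots> = sqrt 2 / 4 * Beta (1/2) (1/4)"
    by (subst integral_mult_right) (simp only: integral_unique[OF has_integral_Beta_half_quarter])
  also have "Beta (1/2) (1/4) = Gamma (1/2) * Gamma (1/4) / Gamma (3/4 :: real)"
    by (simp add: Beta_def)
  also have "Gamma (1/4::real) = sqrt 2 * pi / Gamma (3/4)"
  proof -
    have "Gamma (3/4::real) > 0"
      by simp
    then have "Gamma (3/4::real) \<noteq> 0"
      by linarith
    then show ?thesis
      using Gamma_quarter_mult_three_quarters by (simp add: eq_divide_eq)
  qed
  finally show ?thesis
    by (simp add: Gamma_one_half_real power2_eq_square field_simps)
qed

section \<open>K as a power series\<close>

(* wallis_ratio n = (2n choose n) / 4^n *)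
fun wallis_ratio :: "nat \<Rightarrow> real" where
  "wallis_ratio 0 = 1"
| "wallis_ratio (Suc n) = wallis_ratio n * (2 * real n + 1) / (2 * real n + 2)"

lemma wallis_ratio_pos: "wallis_ratio n > 0"
  by (induction n) auto

lemma wallis_ratio_le_one: "wallis_ratio n \<le> 1"
proof (induction n)
  case (Suc n)
  have "wallis_ratio n * (2 * real n + 1) \<le> 1 * (2 * real n + 1)"
    by (rule mult_right_mono[OF Suc.IH]) simp
  then show ?case
    by (simp add: field_simps)
qed simp

lemma wallis_ratio_eq_gbinomial: "wallis_ratio n = (-1)^n * ((-1/2::real) gchoose n)"
proof (induction n)
  case (Suc n)
  have rec: "(-1/2::real) gchoose (Suc n) = (-1/2 - real n) * ((-1/2) gchoose n) / (real n + 1)"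
    using gbinomial_mult_1[of "-1/2::real" n] by (simp add: field_simps)
  show ?case
    unfolding wallis_ratio.simps Suc rec by (simp add: field_simps)
qed simp

lemma has_integral_sin_power_even:
  "((\<lambda>t. sin t ^ (2*n)) has_integral pi/2 * wallis_ratio n) {0..pi/2}"
proof (induction n)
  case 0
  show ?case
    using has_integral_const_real[of "1::real" 0 "pi/2"] by simp
next
  case (Suc n)
  define F :: "real \<Rightarrow> real" where "F t = sin t ^ (2*n+1) * cos t" for t
  define F' :: "real \<Rightarrow> real"
    where "F' t = (2*real n+1) * sin t ^ (2*n) - (2*real n+2) * sin t ^ (2*n+2)" for t
  have "(F has_real_derivative F' t) (at t)" for t
  proof -
    have "((\<lambda>t. sin t ^ (2*n+1)) has_real_derivative
            (2*real n+1) * sin t ^ (2*n) * cos t) (at t)"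
      using DERIV_power[OF DERIV_sin[of t], of "2*n+1"] by (simp add: algebra_simps)
    from DERIV_mult[OF this DERIV_cos[of t]]
    have "(F has_real_derivative (2*real n+1) * sin t ^ (2*n) * (cos t)^2 - sin t ^ (2*n+2)) (at t)"
      unfolding F_def by (simp add: power2_eq_square algebra_simps)
    moreover have "(2*real n+1) * sin t ^ (2*n) * (cos t)^2 - sin t ^ (2*n+2) = F' t"
      unfolding F'_def cos_squared_eq by (simp add: power_add power2_eq_square algebra_simps)
    ultimately show ?thesis
      by simp
  qed
  then have "(F' has_integral F (pi/2) - F 0) {0..pi/2}"
    by (intro fundamental_theorem_of_calculus)
      (auto simp: has_real_derivative_iff_has_vector_derivative has_vector_derivative_at_within)
  then have "(F' has_integral 0) {0..pi/2}"
    by (simp add: F_def)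
  with Suc have "((\<lambda>t. ((2*real n+1) * sin t ^ (2*n) - F' t) / (2*real n+2)) has_integral
      ((2*real n+1) * (pi/2 * wallis_ratio n) - 0) / (2*real n+2)) {0..pi/2}"
    by (intro has_integral_divide has_integral_diff has_integral_mult_right)
  moreover have "(\<lambda>t. ((2*real n+1) * sin t ^ (2*n) - F' t) / (2*real n+2)) =
      (\<lambda>t. sin t ^ (2 * Suc n))"
    by (auto simp: F'_def field_simps)
  ultimately show ?case
    by (simp add: field_simps)
qed

lemma sums_wallis_ratio:
  fixes z :: real
  assumes "\<bar>z\<bar> < 1"
  shows "(\<lambda>n. wallis_ratio n * z^n) sums (1 / sqrt (1 - z))"
proof -
  have "(\<lambda>n. ((-1/2) gchoose n) * (-z)^n) sums (1 + -z) powr (-1/2)"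
    using gen_binomial_real[of "-z"] assms by simp
  moreover have "((-1/2) gchoose n) * (-z)^n = wallis_ratio n * z^n" for n
    by (simp add: wallis_ratio_eq_gbinomial power_minus[of z])
  moreover have "(1 + -z) powr (-1/2) = 1 / sqrt (1 - z)"
    using assms by (simp add: powr_minus_divide powr_half_sqrt)
  ultimately show ?thesis
    by simp
qed

lemma sums_integral_Weierstrass:
  fixes f :: "nat \<Rightarrow> real \<Rightarrow> real"
  assumes integral: "\<And>n. (f n has_integral I n) {a..b}"
    and cont: "\<And>n. continuous_on {a..b} (f n)"
    and bound: "\<And>n t. t \<in> {a..b} \<Longrightarrow> \<bar>f n t\<bar> \<le> M n"
    and "summable M"
    and sums: "\<And>t. t \<in> {a..b} \<Longrightarrow> (\<lambda>n. f n t) sums g t"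
  shows "I sums integral {a..b} g"
proof -
  have "uniform_limit {a..b} (\<lambda>n t. \<Sum>i<n. f i t) (\<lambda>t. \<Sum>i. f i t) sequentially"
    using bound \<open>summable M\<close> by (intro Weierstrass_m_test) auto
  moreover have "continuous_on {a..b} (\<lambda>t. \<Sum>i<n. f i t)" for n
    using cont by (intro continuous_on_sum) auto
  ultimately obtain I' J where I': "\<And>n. ((\<lambda>t. \<Sum>i<n. f i t) has_integral I' n) {a..b}"
    and J: "((\<lambda>t. \<Sum>i. f i t) has_integral J) {a..b}" and "I' \<longlonglongrightarrow> J"
    by (rule uniform_limit_integral) auto
  have "((\<lambda>t. \<Sum>i<n. f i t) has_integral (\<Sum>i<n. I i)) {a..b}" for n
    using integral by (intro has_integral_sum) auto
  then have "I' = (\<lambda>n. \<Sum>i<n. I i)"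
    using I' has_integral_unique by blast
  moreover have "((\<lambda>t. \<Sum>i. f i t) has_integral J) {a..b} = (g has_integral J) {a..b}"
    by (rule has_integral_cong) (use sums in \<open>simp add: sums_iff\<close>)
  then have "J = integral {a..b} g"
    using J by (simp add: integral_unique)
  ultimately show ?thesis
    using \<open>I' \<longlonglongrightarrow> J\<close> by (simp add: sums_def)
qed

definition ellK_coeff :: "nat \<Rightarrow> real" where
  "ellK_coeff n = (wallis_ratio n)^2"

lemma ellK_coeff_pos: "ellK_coeff n > 0"
  using wallis_ratio_pos[of n] by (simp add: ellK_coeff_def)

lemma ellK_coeff_le_one: "ellK_coeff n \<le> 1"
  using wallis_ratio_pos[of n] wallis_ratio_le_one[of n] by (simp add: ellK_coeff_def power_le_one)

lemma ellK_coeff_Suc: "ellK_coeff (Suc n) = ellK_coeff n * ((2 * real n + 1) / (2 * real n + 2))^2"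
  by (simp add: ellK_coeff_def power_mult_distrib power_divide)

lemma summable_ellK_coeff:
  fixes x :: real
  assumes "\<bar>x\<bar> < 1"
  shows "summable (\<lambda>n. ellK_coeff n * x^n)"
proof (rule summable_comparison_test')
  show "summable (\<lambda>n. \<bar>x\<bar>^n)"
    using assms by simp
  show "norm (ellK_coeff n * x^n) \<le> \<bar>x\<bar>^n" for n
    using ellK_coeff_pos[of n] ellK_coeff_le_one[of n]
    by (simp add: abs_mult power_abs mult_left_le_one_le)
qed

(* hypF x = 2F1(1/2,1/2;1;x) *)
definition hypF :: "real \<Rightarrow> real" where
  "hypF x = (\<Sum>n. ellK_coeff n * x^n)"

lemma K_sums:
  assumes "0 \<le> x" "x < 1"
  shows "(\<lambda>n. pi/2 * (ellK_coeff n * x^n)) sums K x"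
  unfolding K_def ellipticK_def
proof (rule sums_integral_Weierstrass)
  fix n
  show "((\<lambda>t. wallis_ratio n * x^n * sin t ^ (2*n)) has_integral pi/2 * (ellK_coeff n * x^n))
          {0..pi/2}"
    using has_integral_mult_right[OF has_integral_sin_power_even, of "wallis_ratio n * x^n" n]
    by (simp add: ellK_coeff_def power2_eq_square algebra_simps)
  show "continuous_on {0..pi/2} (\<lambda>t. wallis_ratio n * x^n * sin t ^ (2*n))"
    by (intro continuous_intros)
  fix t :: real
  have "\<bar>sin t ^ (2*n)\<bar> \<le> 1"
    by (simp add: power_abs power_le_one)
  then have "\<bar>wallis_ratio n\<bar> * \<bar>x^n\<bar> * \<bar>sin t ^ (2*n)\<bar> \<le> 1 * x^n * 1"
    using assms wallis_ratio_pos[of n] wallis_ratio_le_one[of n] by (intro mult_mono) auto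
  then show "\<bar>wallis_ratio n * x^n * sin t ^ (2*n)\<bar> \<le> x^n"
    by (simp add: abs_mult)
  have "(sin t)^2 \<le> 1"
    using abs_sin_le_one abs_square_le_1 by blast
  then have "\<bar>x * (sin t)^2\<bar> < 1"
    using assms mult_left_le[of "(sin t)^2" x] by (simp add: abs_mult)
  from sums_wallis_ratio[OF this]
  show "(\<lambda>n. wallis_ratio n * x^n * sin t ^ (2*n))
          sums (1 / sqrt (1 - sqrt x ^ 2 * (sin t)^2))"
    using assms by (simp add: power_mult_distrib power_mult mult.assoc)
next
  show "summable (\<lambda>n. x^n)"
    using assms by simp
qed

lemma K_eq_hypF:
  assumes "0 \<le> x" "x < 1"
  shows "K x = pi/2 * hypF x"
proof -
  have "(\<lambda>n. pi/2 * (ellK_coeff n * x^n)) sums (pi/2 * hypF x)"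
    unfolding hypF_def using summable_ellK_coeff[of x] assms
    by (intro sums_mult summable_sums) simp
  then show ?thesis
    using sums_unique2[OF K_sums[OF assms]] by simp
qed

section \<open>The hypergeometric equation and Legendre's relation\<close>

definition hypF_deriv :: "real \<Rightarrow> real" where
  "hypF_deriv x = (\<Sum>n. diffs ellK_coeff n * x^n)"

lemma hypF_has_derivative:
  assumes "\<bar>x\<bar> < 1"
  shows "(hypF has_real_derivative hypF_deriv x) (at x)"
proof -
  define k where "k = (1 + \<bar>x\<bar>) / 2"
  have "\<bar>k\<bar> < 1" "\<bar>x\<bar> < \<bar>k\<bar>"
    using assms by (auto simp: k_def)
  then show ?thesis
    unfolding hypF_def hypF_deriv_def by (intro termdiffs_strong[OF summable_ellK_coeff]) auto
qed

declare hypF_has_derivative[THEN DERIV_chain2, derivative_intros]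

lemma summable_diffs_ellK_coeff: "\<bar>x\<bar> < 1 \<Longrightarrow> summable (\<lambda>n. diffs ellK_coeff n * x^n)"
  by (rule termdiff_converges[of x 1]) (auto intro: summable_ellK_coeff)

lemma powser_sums_shift:
  fixes c :: "nat \<Rightarrow> real"
  assumes "(\<lambda>n. c n * x^n) sums s"
  shows "(\<lambda>n. (case n of 0 \<Rightarrow> 0 | Suc m \<Rightarrow> c m) * x^n) sums (x * s)"
proof -
  have "(\<lambda>n. x * (c n * x^n)) sums (x * s)"
    using assms by (rule sums_mult)
  then have "(\<lambda>n. (case Suc n of 0 \<Rightarrow> 0 | Suc m \<Rightarrow> c m) * x ^ Suc n) sums (x * s)"
    by (simp add: mult_ac)
  then show ?thesis
    by (subst (asm) sums_Suc_iff) simp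
qed

(* For n = 0 the second term vanishes, as real (0 - 1) = 0. *)
definition hypT_coeff :: "nat \<Rightarrow> real" where
  "hypT_coeff n = real n * ellK_coeff n - real (n - 1) * ellK_coeff (n - 1)"

(* The hypergeometric equation (x(1-x) F')' = F/4, coefficientwise *)
lemma diffs_hypT_coeff: "diffs hypT_coeff n = ellK_coeff n / 4"
proof -
  have "diffs hypT_coeff n =
          (real n + 1) * ((real n + 1) * ellK_coeff (Suc n) - real n * ellK_coeff n)"
    by (simp add: diffs_def hypT_coeff_def algebra_simps)
  also have "\<dots> = ellK_coeff n * ((real n + 1)^2 * ((2 * real n + 1) / (2 * real n + 2))^2
                                    - real n * (real n + 1))"
    unfolding ellK_coeff_Suc by (simp add: algebra_simps power2_eq_square)
  also have "(real n + 1)^2 * ((2 * real n + 1) / (2 * real n + 2))^2 = (2 * real n + 1)^2 / 4"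
  proof -
    have sq: "m^2 * (a / (2 * m))^2 = a^2 / 4" if "m \<noteq> 0" for m a :: real
      using that by (simp add: power_divide power_mult_distrib)
    have "2 * real n + 2 = 2 * (real n + 1)"
      by simp
    then show ?thesis
      by (simp only:) (rule sq, simp)
  qed
  also have "ellK_coeff n * ((2 * real n + 1)^2 / 4 - real n * (real n + 1)) = ellK_coeff n / 4"
    by (simp add: power2_eq_square field_simps)
  finally show ?thesis .
qed

definition hypT :: "real \<Rightarrow> real" where
  "hypT x = x * (1 - x) * hypF_deriv x"

lemma hypT_sums:
  assumes "\<bar>x\<bar> < 1"
  shows "(\<lambda>n. hypT_coeff n * x^n) sums hypT x"
proof -
  define d1 where "d1 n = (case n of 0 \<Rightarrow> 0 | Suc m \<Rightarrow> diffs ellK_coeff m)" for n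
  define d2 where "d2 n = (case n of 0 \<Rightarrow> 0 | Suc m \<Rightarrow> d1 m)" for n
  have "(\<lambda>n. diffs ellK_coeff n * x^n) sums hypF_deriv x"
    unfolding hypF_deriv_def using summable_diffs_ellK_coeff[OF assms] by (rule summable_sums)
  then have "(\<lambda>n. d1 n * x^n) sums (x * hypF_deriv x)"
    unfolding d1_def by (rule powser_sums_shift)
  moreover from this have "(\<lambda>n. d2 n * x^n) sums (x * (x * hypF_deriv x))"
    unfolding d2_def by (rule powser_sums_shift)
  ultimately have "(\<lambda>n. (d1 n - d2 n) * x^n) sums (x * hypF_deriv x - x * (x * hypF_deriv x))"
    unfolding left_diff_distrib by (rule sums_diff)
  moreover have "d1 n - d2 n = hypT_coeff n" for n
    by (auto simp: d1_def d2_def hypT_coeff_def diffs_def split: nat.split)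
  ultimately show ?thesis
    by (simp add: hypT_def algebra_simps)
qed

lemma hypT_has_derivative:
  assumes "\<bar>x\<bar> < 1"
  shows "(hypT has_real_derivative hypF x / 4) (at x)"
proof -
  define k where "k = (1 + \<bar>x\<bar>) / 2"
  have k: "\<bar>k\<bar> < 1" "\<bar>x\<bar> < \<bar>k\<bar>"
    using assms by (auto simp: k_def)
  have "((\<lambda>y. \<Sum>n. hypT_coeff n * y^n) has_real_derivative
          (\<Sum>n. diffs hypT_coeff n * x^n)) (at x)"
    using k by (intro termdiffs_strong[OF sums_summable[OF hypT_sums]]) auto
  also have "(\<Sum>n. diffs hypT_coeff n * x^n) = hypF x / 4"
    unfolding diffs_hypT_coeff hypF_def using summable_ellK_coeff[OF assms]
    by (simp add: suminf_divide[symmetric])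
  finally show ?thesis
  proof (rule has_field_derivative_transform_within_open)
    show "open {-1<..<1::real}" "x \<in> {-1<..<1}"
      using assms by auto
    show "(\<Sum>n. hypT_coeff n * y^n) = hypT y" if "y \<in> {-1<..<1}" for y
      using that hypT_sums[of y] by (simp add: sums_iff abs_less_iff)
  qed
qed

declare hypT_has_derivative[THEN DERIV_chain2, derivative_intros]

lemma hypF_ge_one:
  assumes "0 \<le> x" "x < 1"
  shows "hypF x \<ge> 1"
proof -
  have "(\<Sum>n<1. ellK_coeff n * x^n) \<le> hypF x"
    unfolding hypF_def using assms ellK_coeff_pos[THEN less_imp_le]
    by (intro sum_le_suminf summable_ellK_coeff) (auto intro!: mult_nonneg_nonneg)
  then show ?thesis
    by (simp add: ellK_coeff_def)
qed

definition hypU :: "real \<Rightarrow> real" where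
  "hypU x = hypT x / hypF x"

lemma hypU_has_derivative:
  assumes "0 < x" "x < 1"
  shows "(hypU has_real_derivative 1/4 - (hypU x)^2 / (x * (1 - x))) (at x)"
proof -
  have pos: "hypF x > 0"
    using assms hypF_ge_one[of x] by auto
  have "(hypU has_real_derivative
           (hypF x / 4 * hypF x - hypT x * hypF_deriv x) / (hypF x * hypF x)) (at x)"
    unfolding hypU_def[abs_def] using assms pos
    by (intro DERIV_divide hypT_has_derivative hypF_has_derivative) auto
  also have "(hypF x / 4 * hypF x - hypT x * hypF_deriv x) / (hypF x * hypF x) =
               1/4 - (hypU x)^2 / (x * (1 - x))"
    using assms pos by (simp add: hypU_def hypT_def field_simps power2_eq_square)
  finally show ?thesis .
qed

declare hypU_has_derivative[THEN DERIV_chain2, derivative_intros]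

definition legendre_const :: real where
  "legendre_const = hypF (1/2) * hypF_deriv (1/2) / 2"

lemma legendre_relation:
  assumes "0 < x" "x < 1"
  shows "hypT x * hypF (1 - x) + hypF x * hypT (1 - x) = legendre_const"
proof -
  have "((\<lambda>x. hypT x * hypF (1 - x) + hypF x * hypT (1 - x)) has_real_derivative 0) (at y)"
    if "y \<in> {0<..<1}" for y
  proof -
    have "((\<lambda>x. hypT x * hypF (1 - x) + hypF x * hypT (1 - x)) has_real_derivative
            hypF y / 4 * hypF (1 - y) - hypT y * hypF_deriv (1 - y)
            + hypF_deriv y * hypT (1 - y) - hypF y * hypF (1 - y) / 4) (at y)"
      using that by (auto intro!: derivative_eq_intros)
    also have "hypF y / 4 * hypF (1 - y) - hypT y * hypF_deriv (1 - y)
            + hypF_deriv y * hypT (1 - y) - hypF y * hypF (1 - y) / 4 = 0"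
      by (simp add: hypT_def algebra_simps)
    finally show ?thesis .
  qed
  from DERIV_isconst3[of 0 1 x "1/2", OF _ _ _ this] assms
  show ?thesis
    by (simp add: legendre_const_def hypT_def)
qed

lemma hypU_add_reflect:
  assumes "0 < x" "x < 1"
  shows "hypU x + hypU (1 - x) = legendre_const / (hypF x * hypF (1 - x))"
proof -
  have "hypF x > 0" "hypF (1 - x) > 0"
    using assms hypF_ge_one[of x] hypF_ge_one[of "1 - x"] by auto
  then show ?thesis
    unfolding legendre_relation[OF assms, symmetric] hypU_def by (simp add: field_simps)
qed

section \<open>Numerical estimates\<close>

lemma hypF_mono:
  assumes "0 \<le> x" "x \<le> y" "y < 1"
  shows "hypF x \<le> hypF y"
  unfolding hypF_def
proof (rule suminf_le)
  show "ellK_coeff n * x^n \<le> ellK_coeff n * y^n" for n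
    using assms ellK_coeff_pos[of n] by (intro mult_left_mono power_mono) auto
qed (use assms in \<open>auto intro!: summable_ellK_coeff\<close>)

lemma hypF_half_ge: "hypF (1/2) \<ge> 118/100"
proof -
  have "(\<Sum>n<10. ellK_coeff n * (1/2)^n) \<le> hypF (1/2)"
    unfolding hypF_def using ellK_coeff_pos[THEN less_imp_le]
    by (intro sum_le_suminf summable_ellK_coeff) auto
  moreover have "(\<Sum>n<10. ellK_coeff n * (1/2::real)^n) \<ge> 118/100"
    by (simp add: ellK_coeff_def numeral_eq_Suc lessThan_Suc)
  ultimately show ?thesis
    by linarith
qed

lemma hypF_half_le: "hypF (1/2) \<le> 1183/1000"
proof -
  have summable: "summable (\<lambda>n. ellK_coeff n * (1/2::real)^n)"
    by (rule summable_ellK_coeff) simp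
  have "hypF (1/2) =
          (\<Sum>n. ellK_coeff (n + 10) * (1/2)^(n + 10)) + (\<Sum>n<10. ellK_coeff n * (1/2)^n)"
    unfolding hypF_def by (rule suminf_split_initial_segment[OF summable])
  also have "(\<Sum>n. ellK_coeff (n + 10) * (1/2::real)^(n + 10))
               \<le> (\<Sum>n. (1/2)^10 * (1/2::real)^n)"
  proof (rule suminf_le)
    show "ellK_coeff (n + 10) * (1/2::real)^(n + 10) \<le> (1/2)^10 * (1/2)^n" for n
      using ellK_coeff_le_one[of "n + 10"] ellK_coeff_pos[of "n + 10"]
      by (simp add: power_add mult_left_le_one_le)
  qed (use summable in \<open>auto intro: summable_ignore_initial_segment\<close>)
  also have "(\<Sum>n. (1/2)^10 * (1/2::real)^n) = 1/512"
    by (subst suminf_mult) (simp_all add: suminf_geometric power_one_over)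
  also have "(\<Sum>n<10. ellK_coeff n * (1/2::real)^n) \<le> 1183/1000 - 1/512"
    by (simp add: ellK_coeff_def numeral_eq_Suc lessThan_Suc)
  finally show ?thesis
    by simp
qed

lemma hypF_deriv_half_ge: "hypF_deriv (1/2) \<ge> 538/1000"
proof -
  have "(\<Sum>n<10. diffs ellK_coeff n * (1/2)^n) \<le> hypF_deriv (1/2)"
    unfolding hypF_deriv_def using ellK_coeff_pos[THEN less_imp_le]
    by (intro sum_le_suminf summable_diffs_ellK_coeff) (auto simp: diffs_def)
  moreover have "(\<Sum>n<10. diffs ellK_coeff n * (1/2::real)^n) \<ge> 538/1000"
    by (simp add: diffs_def ellK_coeff_def numeral_eq_Suc lessThan_Suc)
  ultimately show ?thesis
    by linarith
qed

lemma legendre_const_ge: "legendre_const \<ge> (118/100) * (538/1000) / 2"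
proof -
  have "(118/100) * (538/1000) \<le> hypF (1/2) * hypF_deriv (1/2)"
    using hypF_half_ge hypF_deriv_half_ge by (intro mult_mono) auto
  then show ?thesis
    by (simp add: legendre_const_def)
qed

lemma ellK_coeff_le_inverse: "ellK_coeff n \<le> 1 / (3 * real n + 1)"
proof (induction n)
  case 0
  show ?case
    by (simp add: ellK_coeff_def)
next
  case (Suc n)
  have "(2 * real n + 1)^2 * (3 * real n + 4) \<le> (3 * real n + 1) * (2 * real n + 2)^2"
    by (simp add: power2_eq_square algebra_simps)
  then have ratio: "((2 * real n + 1) / (2 * real n + 2))^2 \<le> (3 * real n + 1) / (3 * real n + 4)"
    by (simp add: power_divide divide_simps add_pos_pos)
  have "ellK_coeff (Suc n) = ellK_coeff n * ((2 * real n + 1) / (2 * real n + 2))^2"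
    by (rule ellK_coeff_Suc)
  also have "\<dots> \<le> 1 / (3 * real n + 1) * ((3 * real n + 1) / (3 * real n + 4))"
    using Suc.IH ratio ellK_coeff_pos[of n] by (intro mult_mono) auto
  also have "\<dots> = 1 / (3 * real (Suc n) + 1)"
    by (simp add: field_simps)
  finally show ?case .
qed

lemma hypF_le_log:
  assumes "0 \<le> y" "y < 1"
  shows "hypF y \<le> 1 + ln (1 / (1 - y)) / 3"
proof -
  define g where "g n = (if n = 0 then 1 else 0) + 1/3 * (y^n / real n)" for n
  have "(\<lambda>n. - ((- (- y))^n) / real n) sums ln (1 + - y)"
    using assms by (intro ln_series') simp
  then have "(\<lambda>n. y^n / real n) sums (- ln (1 - y))"
    using sums_minus by fastforce
  then have g: "g sums (1 + 1/3 * (- ln (1 - y)))"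
    unfolding g_def by (intro sums_add sums_mult) (rule sums_single)
  have "hypF y \<le> suminf g"
    unfolding hypF_def
  proof (rule suminf_le)
    show "ellK_coeff n * y^n \<le> g n" for n
    proof (cases "n = 0")
      case False
      then have "ellK_coeff n \<le> 1 / (3 * real n)"
        using ellK_coeff_le_inverse[of n] by (simp add: order_trans[OF _ divide_left_mono])
      from mult_right_mono[OF this, of "y^n"] show ?thesis
        using False assms by (simp add: g_def)
    qed (simp add: g_def ellK_coeff_def)
  qed (use assms g in \<open>auto intro: summable_ellK_coeff sums_summable\<close>)
  also have "suminf g = 1 + ln (1 / (1 - y)) / 3"
    using sums_unique[OF g] assms by (simp add: ln_div)
  finally show ?thesis .
qed

lemma sqrt_mult_ln_inverse_le:
  assumes "0 < x"
  shows "sqrt x * ln (1 / x) \<le> 2 / exp 1"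
proof -
  define y where "y = 1 / sqrt x"
  have y: "y > 0"
    using assms by (simp add: y_def)
  have "ln y = ln (y / exp 1) + 1"
    using y by (simp add: ln_div)
  also have "\<dots> \<le> y / exp 1"
    using ln_le_minus_one[of "y / exp 1"] y by simp
  finally have "ln y \<le> y / exp 1" .
  have "ln (1 / x) = 2 * ln y"
    using assms y by (simp add: y_def ln_sqrt ln_div)
  then have "sqrt x * ln (1 / x) = 2 * sqrt x * ln y"
    by simp
  also have "\<dots> \<le> 2 * sqrt x * (y / exp 1)"
    using \<open>ln y \<le> y / exp 1\<close> assms by (intro mult_left_mono) auto
  also have "\<dots> = 2 / exp 1"
    using assms by (simp add: y_def)
  finally show ?thesis .
qed

lemma sqrt_mult_hypF_reflect_le:
  assumes "0 < x" "x \<le> 1/2"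
  shows "sqrt (x * (1 - x)) * hypF (1 - x) \<le> 1/2 + 2 / (3 * exp 1)"
proof -
  define \<sigma> where "\<sigma> = sqrt (x * (1 - x))"
  have "x * (1 - x) \<le> 1/4"
    using zero_le_power2[of "x - 1/2"] by (simp add: power2_eq_square algebra_simps)
  then have "\<sigma> \<le> sqrt (1/4)"
    unfolding \<sigma>_def by (rule real_sqrt_le_mono)
  then have \<sigma>_le_half: "\<sigma> \<le> 1/2"
    by (simp add: real_sqrt_divide)
  have \<sigma>_le_sqrt: "\<sigma> \<le> sqrt x"
    unfolding \<sigma>_def using assms by (intro real_sqrt_le_mono) (simp add: mult_left_le)
  have "\<sigma> \<ge> 0" "ln (1 / x) \<ge> 0"
    using assms by (simp_all add: \<sigma>_def)
  have "\<sigma> * hypF (1 - x) \<le> \<sigma> * (1 + ln (1 / x) / 3)"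
    using hypF_le_log[of "1 - x"] assms \<open>\<sigma> \<ge> 0\<close> by (intro mult_left_mono) auto
  also have "\<dots> \<le> 1/2 + sqrt x * ln (1 / x) / 3"
    using \<sigma>_le_half mult_right_mono[OF \<sigma>_le_sqrt \<open>ln (1 / x) \<ge> 0\<close>]
    by (simp add: algebra_simps)
  also have "\<dots> \<le> 1/2 + 2 / (3 * exp 1)"
    using sqrt_mult_ln_inverse_le[OF assms(1)] by simp
  finally show ?thesis
    by (simp add: \<sigma>_def)
qed

lemma hypF_product_le_legendre_const:
  assumes "0 < x" "x \<le> 1/2"
  shows "x * (1 - x) * (hypF x * hypF (1 - x))^2 \<le> 8 * legendre_const^2"
proof -
  have F_ge: "hypF x \<ge> 1" "hypF (1 - x) \<ge> 1"
    using assms by (auto intro!: hypF_ge_one)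
  have "exp (1::real) \<ge> 2718/1000"
    using abs_le_D2[OF e_approx_32] by simp
  then have "1/2 + 2 / (3 * exp 1) \<le> 1/2 + 2 / (3 * (2718/1000::real))"
    by (intro add_left_mono divide_left_mono) auto
  then have "sqrt (x * (1 - x)) * hypF (1 - x) * hypF x
               \<le> (1/2 + 2 / (3 * (2718/1000))) * (1183/1000)"
    using sqrt_mult_hypF_reflect_le[OF assms] hypF_mono[of x "1/2"] hypF_half_le assms F_ge
    by (intro mult_mono) auto
  then have "(sqrt (x * (1 - x)) * hypF (1 - x) * hypF x)^2
               \<le> ((1/2 + 2 / (3 * (2718/1000))) * (1183/1000))^2"
    using assms F_ge by (intro power_mono) auto
  also have "\<dots> \<le> 8 * ((118/100) * (538/1000) / 2)^2"
    by (simp add: power2_eq_square)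
  also have "\<dots> \<le> 8 * legendre_const^2"
    using legendre_const_ge by (simp add: power_mono)
  finally show ?thesis
    using assms by (simp add: power_mult_distrib algebra_simps)
qed

lemma hypU_sq_add_ge:
  assumes "0 < x" "x \<le> 1/2"
  shows "(hypU x)^2 + (hypU (1 - x))^2 \<ge> x * (1 - x) / 16"
proof -
  define P where "P = hypF x * hypF (1 - x)"
  have "P > 0"
    using assms hypF_ge_one[of x] hypF_ge_one[of "1 - x"] by (simp add: P_def)
  have "x * (1 - x) / 8 * P^2 \<le> legendre_const^2"
    using hypF_product_le_legendre_const[OF assms] by (simp add: P_def)
  then have "x * (1 - x) / 8 \<le> legendre_const^2 / P^2"
    using \<open>P > 0\<close> by (simp add: le_divide_eq)
  also have "\<dots> = (hypU x + hypU (1 - x))^2"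
    using assms by (simp add: hypU_add_reflect P_def power_divide)
  also have "\<dots> \<le> 2 * ((hypU x)^2 + (hypU (1 - x))^2)"
    using zero_le_power2[of "hypU x - hypU (1 - x)"] by (simp add: power2_eq_square algebra_simps)
  finally show ?thesis
    by simp
qed

section \<open>Maximality of the product at 1/2\<close>

definition log_prod :: "real \<Rightarrow> real \<Rightarrow> real" where
  "log_prod p x = p * ln x + p * ln (1 - x) + ln (hypF x) + ln (hypF (1 - x))"

definition log_prod_slope :: "real \<Rightarrow> real \<Rightarrow> real" where
  "log_prod_slope p x = p * (1 - 2 * x) + hypU x - hypU (1 - x)"

lemma log_prod_slope_has_derivative:
  assumes "0 < x" "x < 1"
  shows "(log_prod_slope p has_real_derivative
            1/2 - 2 * p - ((hypU x)^2 + (hypU (1 - x))^2) / (x * (1 - x))) (at x)"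
proof -
  have "(log_prod_slope p has_real_derivative
           - 2 * p + (1/4 - (hypU x)^2 / (x * (1 - x)))
           + (1/4 - (hypU (1 - x))^2 / ((1 - x) * (1 - (1 - x))))) (at x)"
    unfolding log_prod_slope_def[abs_def] using assms
    by (auto intro!: derivative_eq_intros)
  also have "- 2 * p + (1/4 - (hypU x)^2 / (x * (1 - x)))
           + (1/4 - (hypU (1 - x))^2 / ((1 - x) * (1 - (1 - x))))
           = 1/2 - 2 * p - ((hypU x)^2 + (hypU (1 - x))^2) / (x * (1 - x))"
    by (simp add: add_divide_distrib mult.commute)
  finally show ?thesis .
qed

lemma log_prod_slope_nonneg:
  assumes "p \<ge> 7/32" "0 < x" "x \<le> 1/2"
  shows "log_prod_slope p x \<ge> 0"
proof -
  have "log_prod_slope p (1/2) \<le> log_prod_slope p x"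
  proof (rule DERIV_nonpos_imp_decreasing_open[OF \<open>x \<le> 1/2\<close>])
    fix y
    assume "x < y" "y < 1/2"
    with assms have "0 < y" "y \<le> 1/2" "y * (1 - y) > 0"
      by auto
    then have "((hypU y)^2 + (hypU (1 - y))^2) / (y * (1 - y)) \<ge> 1/16"
      using hypU_sq_add_ge by (simp add: le_divide_eq)
    with assms have "1/2 - 2 * p - ((hypU y)^2 + (hypU (1 - y))^2) / (y * (1 - y)) \<le> 0"
      by linarith
    with \<open>0 < y\<close> \<open>y < 1/2\<close>
    show "\<exists>d. (log_prod_slope p has_real_derivative d) (at y) \<and> d \<le> 0"
      using log_prod_slope_has_derivative[of y p] by auto
  next
    show "continuous_on {x..1/2} (log_prod_slope p)"
      using assms by (intro continuous_at_imp_continuous_on ballI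
          DERIV_isCont[OF log_prod_slope_has_derivative]) auto
  qed
  then show ?thesis
    by (simp add: log_prod_slope_def)
qed

lemma log_prod_has_derivative:
  assumes "0 < x" "x < 1"
  shows "(log_prod p has_real_derivative log_prod_slope p x / (x * (1 - x))) (at x)"
proof -
  have pos: "hypF x > 0" "hypF (1 - x) > 0"
    using assms hypF_ge_one[of x] hypF_ge_one[of "1 - x"] by auto
  have "(log_prod p has_real_derivative
           p / x - p / (1 - x) + hypF_deriv x / hypF x - hypF_deriv (1 - x) / hypF (1 - x)) (at x)"
    unfolding log_prod_def[abs_def] using assms pos
    by (auto intro!: derivative_eq_intros simp: field_simps)
  also have "p / x - p / (1 - x) + hypF_deriv x / hypF x - hypF_deriv (1 - x) / hypF (1 - x)
               = log_prod_slope p x / (x * (1 - x))"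
    using assms pos by (simp add: log_prod_slope_def hypU_def hypT_def field_simps)
  finally show ?thesis .
qed

lemma log_prod_le_half:
  assumes "p \<ge> 7/32" "0 < x" "x < 1"
  shows "log_prod p x \<le> log_prod p (1/2)"
proof -
  have left: "log_prod p y \<le> log_prod p (1/2)" if "0 < y" "y \<le> 1/2" for y
  proof (rule DERIV_nonneg_imp_increasing_open[OF \<open>y \<le> 1/2\<close>])
    fix z
    assume "y < z" "z < 1/2"
    with that have "log_prod_slope p z / (z * (1 - z)) \<ge> 0"
      using log_prod_slope_nonneg[OF assms(1), of z] by simp
    with \<open>y < z\<close> \<open>z < 1/2\<close> that
    show "\<exists>d. (log_prod p has_real_derivative d) (at z) \<and> d \<ge> 0"
      using log_prod_has_derivative[of z p] by auto
  next
    show "continuous_on {y..1/2} (log_prod p)"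
      using that by (intro continuous_at_imp_continuous_on ballI
          DERIV_isCont[OF log_prod_has_derivative]) auto
  qed
  show ?thesis
  proof (cases "x \<le> 1/2")
    case False
    then have "log_prod p (1 - x) \<le> log_prod p (1/2)"
      using assms by (intro left) auto
    then show ?thesis
      by (simp add: log_prod_def)
  qed (use assms left in auto)
qed

lemma exp_log_prod:
  assumes "0 < x" "x < 1"
  shows "exp (log_prod p x) = (x - x^2) powr p * hypF x * hypF (1 - x)"
proof -
  have "hypF x > 0" "hypF (1 - x) > 0"
    using assms hypF_ge_one[of x] hypF_ge_one[of "1 - x"] by auto
  moreover have "x - x^2 = x * (1 - x)"
    by (simp add: power2_eq_square algebra_simps)
  then have "(x - x^2) powr p = exp (p * ln x + p * ln (1 - x))"
    using assms by (simp only:) (simp add: powr_def ln_mult distrib_left)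
  ultimately show ?thesis
    by (simp add: log_prod_def exp_add)
qed

lemma K_product_le:
  assumes "p \<ge> 7/32" "0 < r" "r < 1"
  shows "(r - r^2) powr p * K (1 - r) * K r \<le> (K (1/2) / 2 powr p)^2"
proof -
  have "(r - r^2) powr p * K (1 - r) * K r = (pi/2)^2 * exp (log_prod p r)"
    using assms by (simp add: K_eq_hypF exp_log_prod power2_eq_square)
  also have "\<dots> \<le> (pi/2)^2 * exp (log_prod p (1/2))"
    using log_prod_le_half[OF assms] by simp
  also have "\<dots> = (K (1/2) / 2 powr p)^2"
  proof -
    have "(2 powr p)^2 = 4 powr p"
      using powr_mult[of 2 2 p] by (simp add: power2_eq_square)
    then show ?thesis
      by (simp add: exp_log_prod K_eq_hypF power2_eq_square powr_divide field_simps)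
  qed
  finally show ?thesis .
qed

lemma K_half_div_powr: "K (1/2) / 2 powr p = pi * sqrt pi / (2 powr (p + 1) * (Gamma (3/4))^2)"
  unfolding K_half_closed_form by (simp add: powr_add field_simps)

theorem mainTheorem15:
  fixes p :: real
  assumes "p \<ge> 7/32"
  shows "(\<forall>r::real. 0 < r \<and> r < 1 \<longrightarrow>
           sqrt ((r - r^2) powr p * K (1 - r) * K r) \<le> K (1/2) / 2 powr p) \<and>
         K (1/2) / 2 powr p = pi * sqrt pi / (2 powr (p + 1) * (Gamma (3/4))^2)"
proof (intro conjI allI impI K_half_div_powr)
  fix r :: real
  assume "0 < r \<and> r < 1"
  have "hypF (1/2) \<ge> 1"
    by (rule hypF_ge_one) auto
  then have "K (1/2) / 2 powr p \<ge> 0"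
    by (simp add: K_eq_hypF)
  with \<open>0 < r \<and> r < 1\<close>
  show "sqrt ((r - r^2) powr p * K (1 - r) * K r) \<le> K (1/2) / 2 powr p"
    using K_product_le[OF assms] by (intro real_le_lsqrt) auto
qed

end
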